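(* Let $d \ge 2$ be an integer and, for $\nu > 0$, let $h_1(\nu;d) = (\nu+1)^2 + 4 \nu^2 (d-1)$ and $$h_2(\nu;d) = \frac{(\nu + 1) \sqrt{h_1(\nu;d)} - (\nu+1)^2}{4 \nu^2 (d-1)} - \frac{1}{2}.$$ Then $\sup_{\nu > 0} h_2(\nu;d) = \lim_{\nu \to 0^+} h_2(\nu;d) = 0$. *)

theory Defs
  imports "HOL-Analysis.Analysis"
begin

definition h1 :: "real \<Rightarrow> nat \<Rightarrow> real" where
  "h1 \<nu> d = (\<nu> + 1)^2 + 4 * \<nu>^2 * (real d - 1)"

definition h2 :: "real \<Rightarrow> nat \<Rightarrow> real" where
  "h2 \<nu> d = ((\<nu> + 1) * sqrt (h1 \<nu> d) - (\<nu> + 1)^2) / (4 * \<nu>^2 * (real d - 1)) - 1/2"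

end

theory Submission
  imports Defs
begin

text \<open>Rationalising the numerator of h2 turns it into
  \<open>(\<nu> + 1) / (sqrt (h1 \<nu> d) + \<nu> + 1) - 1/2\<close>, which is continuous at \<open>\<nu> = 0\<close> with value 0
  and negative for \<open>\<nu> > 0\<close> because \<open>sqrt (h1 \<nu> d) > \<nu> + 1\<close>. A function bounded above by its
  one-sided limit at the endpoint has that limit as its supremum.\<close>

lemma sqrt_add_diff_div_eq:
  fixes a c :: real
  assumes "a \<ge> 0" "c > 0"
  shows "(a * sqrt (a\<^sup>2 + c) - a\<^sup>2) / c = a / (sqrt (a\<^sup>2 + c) + a)"
proof -
  define s where "s = sqrt (a\<^sup>2 + c)"
  have s_sq: "s\<^sup>2 = a\<^sup>2 + c"
    using assms by (simp add: s_def add_nonneg_nonneg)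
  have "s > 0"
    using assms by (simp add: s_def add_nonneg_pos)
  have "(a * s - a\<^sup>2) * (s + a) = a * c"
    using s_sq by (simp add: algebra_simps power2_eq_square)
  with \<open>s > 0\<close> assms show ?thesis
    unfolding s_def[symmetric] by (simp add: field_simps)
qed

lemma h2_eq:
  assumes "\<nu> > 0" "d \<ge> 2"
  shows "h2 \<nu> d = (\<nu> + 1) / (sqrt (h1 \<nu> d) + (\<nu> + 1)) - 1/2"
  using sqrt_add_diff_div_eq[of "\<nu> + 1" "4 * \<nu>\<^sup>2 * (real d - 1)"] assms
  by (simp add: h2_def h1_def)

lemma h2_neg:
  assumes "\<nu> > 0" "d \<ge> 2"
  shows "h2 \<nu> d < 0"
proof -
  have "(\<nu> + 1)\<^sup>2 < h1 \<nu> d"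
    using assms by (simp add: h1_def)
  then have "\<nu> + 1 < sqrt (h1 \<nu> d)"
    using assms real_less_rsqrt by simp
  then show ?thesis
    using assms by (simp add: h2_eq field_simps)
qed

lemma h2_tendsto_0:
  assumes "d \<ge> 2"
  shows "((\<lambda>\<nu>. h2 \<nu> d) \<longlongrightarrow> 0) (at_right 0)"
proof -
  define g where "g \<nu> = (\<nu> + 1) / (sqrt ((\<nu> + 1)\<^sup>2 + 4 * \<nu>\<^sup>2 * (real d - 1)) + (\<nu> + 1)) - 1/2"
    for \<nu> :: real
  have "(g \<longlongrightarrow> g 0) (at_right 0)"
    unfolding g_def by (intro tendsto_intros) auto
  moreover have "g 0 = 0"
    by (simp add: g_def)
  moreover have "\<forall>\<^sub>F \<nu> in at_right 0. g \<nu> = h2 \<nu> d"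
    using eventually_at_right_less[of 0]
    by eventually_elim (simp add: g_def h2_eq[OF _ assms] h1_def)
  ultimately show ?thesis
    using tendsto_cong by fastforce
qed

lemma cSUP_greaterThan_eq_tendsto_at_right:
  fixes f :: "real \<Rightarrow> real"
  assumes bound: "\<And>x. x > a \<Longrightarrow> f x \<le> L"
    and lim: "(f \<longlongrightarrow> L) (at_right a)"
  shows "(SUP x\<in>{a<..}. f x) = L"
proof (rule antisym)
  show "(SUP x\<in>{a<..}. f x) \<le> L"
    using bound by (intro cSUP_least) auto
  have "bdd_above (f ` {a<..})"
    using bound by (auto intro!: bdd_aboveI[where M = L])
  have "\<forall>\<^sub>F x in at_right a. f x \<le> (SUP x\<in>{a<..}. f x)"
    using eventually_at_right_less[of a]
    by eventually_elim (simp add: cSUP_upper \<open>bdd_above (f ` {a<..})\<close>)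
  then show "L \<le> (SUP x\<in>{a<..}. f x)"
    using tendsto_upperbound[OF lim] by simp
qed

theorem lemma5:
  fixes d :: nat
  assumes "d \<ge> 2"
  shows "(SUP \<nu>\<in>{0<..}. h2 \<nu> d) = 0 \<and> ((\<lambda>\<nu>. h2 \<nu> d) \<longlongrightarrow> 0) (at_right 0)"
proof
  show lim: "((\<lambda>\<nu>. h2 \<nu> d) \<longlongrightarrow> 0) (at_right 0)"
    using h2_tendsto_0[OF assms] .
  show "(SUP \<nu>\<in>{0<..}. h2 \<nu> d) = 0"
    using h2_neg[OF _ assms] lim
    by (intro cSUP_greaterThan_eq_tendsto_at_right) (auto intro: less_imp_le)
qed

end
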